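(* For sets of tags $A, B \subseteq T$, the map $\phi_{A\to B} : O_A \to O_B$ is a lattice homomorphism preserving arbitrary meets and joins: for all $O' \subseteq O_A$, (i) $\bigwedge\{\phi_{A\to B}(f) \mid f \in O'\} = \phi_{A\to B}(\bigwedge O')$, and (ii) $\bigvee\{\phi_{A\to B}(f) \mid f\in O'\} = \phi_{A\to B}(\bigvee O')$.
   Context: $T$ is a set of tags and $O$ a set of options. For $T' \subseteq T$, the options lattice $O_{T'}$ consists of all functions $f : T' \to \mathcal{P}(O)$, ordered pointwise by inclusion; the meet $\bigwedge$ of a subset is the pointwise intersection and the join $\bigvee$ is the pointwise union. The map $\phi_{A\to B} : O_A \to O_B$ is defined by $\phi_{A\to B}(f)(t) = f(t)$ if $t \in A\cap B$ and $\phi_{A\to B}(f)(t) = O$ if $t \in B \setminus A$. *)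

theory Defs
  imports "HOL-Library.FuncSet"
begin

text \<open>Options lattice O_{T'}: functions T' \<rightarrow> P(Opt), represented as extensional
  functions (value undefined outside T').\<close>
definition opts :: "'t set \<Rightarrow> 'o set \<Rightarrow> ('t \<Rightarrow> 'o set) set" where
  "opts T' Opt = (T' \<rightarrow>\<^sub>E Pow Opt)"

text \<open>Meet: pointwise intersection (within P(Opt), so the empty meet is the top element).\<close>
definition opts_meet :: "'t set \<Rightarrow> 'o set \<Rightarrow> ('t \<Rightarrow> 'o set) set \<Rightarrow> ('t \<Rightarrow> 'o set)" where
  "opts_meet T' Opt F = (\<lambda>t\<in>T'. Opt \<inter> (\<Inter>f\<in>F. f t))"

definition opts_join :: "'t set \<Rightarrow> 'o set \<Rightarrow> ('t \<Rightarrow> 'o set) set \<Rightarrow> ('t \<Rightarrow> 'o set)" where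
  "opts_join T' Opt F = (\<lambda>t\<in>T'. (\<Union>f\<in>F. f t))"

definition phi :: "'t set \<Rightarrow> 't set \<Rightarrow> 'o set \<Rightarrow> ('t \<Rightarrow> 'o set) \<Rightarrow> ('t \<Rightarrow> 'o set)" where
  "phi A B Opt f = (\<lambda>t\<in>B. if t \<in> A then f t else Opt)"

end

theory Submission
  imports Defs
begin

text \<open>Neither identity needs \<open>F \<subseteq> opts A Opt\<close>: on \<open>A \<inter> B\<close> both sides compute the same
  pointwise meet or join, and on \<open>B - A\<close> both sides are \<open>Opt\<close>. For joins the latter needs
  \<open>F \<noteq> {}\<close>, since the empty join is \<open>{}\<close> rather than \<open>Opt\<close>.\<close>

lemma opts_meet_image_phi:
  "opts_meet B Opt (phi A B Opt ` F) = phi A B Opt (opts_meet A Opt F)"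
  by (rule ext) (auto simp: opts_meet_def phi_def)

lemma opts_join_image_phi:
  assumes "F \<noteq> {}"
  shows "opts_join B Opt (phi A B Opt ` F) = phi A B Opt (opts_join A Opt F)"
  using assms by (auto intro!: ext simp: opts_join_def phi_def split: if_splits)

theorem theorem4:
  fixes T A B :: "'t set" and Opt :: "'o set" and F :: "('t \<Rightarrow> 'o set) set"
  assumes "A \<subseteq> T" and "B \<subseteq> T" and "F \<subseteq> opts A Opt"
  shows "opts_meet B Opt (phi A B Opt ` F) = phi A B Opt (opts_meet A Opt F)
       \<and> (F \<noteq> {} \<longrightarrow> opts_join B Opt (phi A B Opt ` F) = phi A B Opt (opts_join A Opt F))"
  by (simp add: opts_meet_image_phi opts_join_image_phi)

end
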